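(* Let $q$ be a prime power and $m\ge2$ an integer, and set $n'=\lceil\frac{q^{m-1}}{q-1}\rceil$. Let $\mathbf{C}'$ be the code obtained from the $q$-ary simplex $[\frac{q^m-1}{q-1},m,q^{m-1}]_q$ code by the extension construction. Then $\mathbf{C}'$ is a minimal linear $[\frac{q^m-1}{q-1}+n',\ m,\ q^{m-1}]_q$ code violating the Ashikhmin–Barg condition, with weight distribution: one codeword of weight $0$, $q^{m-1}-1$ codewords of weight $q^{m-1}$, and $(q-1)q^{m-1}$ codewords of weight $q^{m-1}+n'$.
   Context: The $q$-ary simplex code of dimension $m$ is generated by an $m\times\frac{q^m-1}{q-1}$ matrix whose columns are representatives of all one-dimensional subspaces of $\mathbf{F}_q^m$; all its nonzero codewords have weight $q^{m-1}$. Extension construction for a $q$-ary $[N,K]$ code $\mathbf{D}$ with $K\ge2$, minimum nonzero weight $w_{min}$, maximum weight $w_{max}$ and $n'=\lceil\frac{qw_{min}}{q-1}\rceil-w_{max}\ge1$: choose a basis $\mathbf{r}_1,\dots,\mathbf{r}_K$ with $wt(\mathbf{r}_1)=w_{max}$, $wt(\mathbf{r}_2)=w_{min}$ and $\mathbf{a}\in(\mathbf{F}_q^* )^{n'}$; the extended code is generated by $(\mathbf{a},\mathbf{r}_1),(\mathbf{0},\mathbf{r}_2),\dots,(\mathbf{0},\mathbf{r}_K)$ in $\mathbf{F}_q^{n'+N}$. Minimal code: any nonzero codewords $\mathbf{c},\mathbf{c}'$ with $supp(\mathbf{c}')\subseteq supp(\mathbf{c})$ satisfy $\mathbf{c}'=\lambda\mathbf{c}$,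 $\lambda\in\mathbf{F}_q^*$. Ashikhmin–Barg condition: $w_{min}/w_{max}>(q-1)/q$. *)

theory Defs
  imports Complex_Main "HOL-Library.Cardinality"
begin

text \<open>Vectors in F_q^N are lists of length N over a finite field 'a; q = CARD('a).\<close>

definition smul :: "'a::field \<Rightarrow> 'a list \<Rightarrow> 'a list" where
  "smul c v = map (\<lambda>x. c * x) v"

definition wt :: "'a::zero list \<Rightarrow> nat" where
  "wt v = length (filter (\<lambda>x. x \<noteq> 0) v)"

definition supp :: "'a::zero list \<Rightarrow> nat set" where
  "supp v = {i. i < length v \<and> v ! i \<noteq> 0}"

definition lincomb :: "nat \<Rightarrow> 'a::field list \<Rightarrow> 'a list list \<Rightarrow> 'a list" where
  "lincomb N cs vs = map (\<lambda>j. \<Sum>i<length vs. cs ! i * (vs ! i) ! j) [0..<N]"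

definition lspan :: "nat \<Rightarrow> 'a::field list list \<Rightarrow> 'a list set" where
  "lspan N vs = {lincomb N cs vs | cs. length cs = length vs}"

definition lin_indep :: "nat \<Rightarrow> 'a::field list list \<Rightarrow> bool" where
  "lin_indep N vs \<longleftrightarrow> (\<forall>cs. length cs = length vs \<and> lincomb N cs vs = replicate N 0
       \<longrightarrow> (\<forall>c\<in>set cs. c = 0))"

definition is_basis :: "nat \<Rightarrow> 'a::field list list \<Rightarrow> 'a list set \<Rightarrow> bool" where
  "is_basis N vs D \<longleftrightarrow> (\<forall>v\<in>set vs. length v = N) \<and> lin_indep N vs \<and> lspan N vs = D"

definition wmin :: "'a::zero list set \<Rightarrow> nat" where
  "wmin C = Min {wt c | c. c \<in> C \<and> c \<noteq> replicate (length c) 0}"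

definition wmax :: "'a::zero list set \<Rightarrow> nat" where
  "wmax C = Max {wt c | c. c \<in> C}"

definition linear_code :: "nat \<Rightarrow> nat \<Rightarrow> nat \<Rightarrow> 'a::field list set \<Rightarrow> bool" where
  "linear_code n k d C \<longleftrightarrow> (\<exists>vs. length vs = k \<and> is_basis n vs C) \<and> wmin C = d"

definition minimal_code :: "'a::field list set \<Rightarrow> bool" where
  "minimal_code C \<longleftrightarrow> (\<forall>c\<in>C. \<forall>c'\<in>C. c \<noteq> replicate (length c) 0 \<and> c' \<noteq> replicate (length c') 0
      \<and> supp c' \<subseteq> supp c \<longrightarrow> (\<exists>l. l \<noteq> 0 \<and> c' = smul l c))"

definition AB_condition :: "'a::{finite,field} list set \<Rightarrow> bool" where
  "AB_condition C \<longleftrightarrow> real (wmin C) / real (wmax C) > (real CARD('a) - 1) / real CARD('a)"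

text \<open>Columns cols (each in F_q^m) are representatives of all one-dimensional subspaces of F_q^m.\<close>
definition simplex_columns :: "nat \<Rightarrow> 'a::{finite,field} list list \<Rightarrow> bool" where
  "simplex_columns m cols \<longleftrightarrow>
     (\<forall>c\<in>set cols. length c = m \<and> c \<noteq> replicate m 0) \<and>
     (\<forall>i<length cols. \<forall>j<length cols. i \<noteq> j \<longrightarrow> (\<forall>l. cols ! i \<noteq> smul l (cols ! j))) \<and>
     (\<forall>v. length v = m \<and> v \<noteq> replicate m 0 \<longrightarrow> (\<exists>c\<in>set cols. \<exists>l. v = smul l c))"

text \<open>The code generated by the m x N matrix with columns cols (row space).\<close>
definition gen_code :: "nat \<Rightarrow> 'a::field list list \<Rightarrow> 'a list set" where
  "gen_code m cols = lspan (length cols) (map (\<lambda>i. map (\<lambda>c. c ! i) cols) [0..<m])"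

definition ext_len :: "'a::{finite,field} list set \<Rightarrow> int" where
  "ext_len (D :: 'a list set) =
     \<lceil>real CARD('a) * real (wmin D) / (real CARD('a) - 1)\<rceil> - int (wmax D)"

definition is_extension :: "nat \<Rightarrow> 'a::{finite,field} list set \<Rightarrow> 'a list set \<Rightarrow> bool" where
  "is_extension N D C' \<longleftrightarrow>
     (\<exists>rs a. length rs \<ge> 2 \<and> is_basis N rs D \<and>
        wt (rs ! 0) = wmax D \<and> wt (rs ! 1) = wmin D \<and>
        ext_len D \<ge> 1 \<and> length a = nat (ext_len D) \<and> (\<forall>x\<in>set a. x \<noteq> 0) \<and>
        C' = lspan (length a + N)
               ((a @ rs ! 0) # map (\<lambda>r. replicate (length a) 0 @ r) (tl rs)))"

end

theory Submission
  imports Defs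
begin

(* The simplex code is a one-weight code: its codeword for u is (u . c)_c over the column
   representatives c, and since the multiples l c (l nonzero) run through every nonzero vector
   exactly once, its weight is (q^m - q^(m-1)) / (q - 1) = q^(m-1), the number of vectors off the
   hyperplane u^perp divided by q - 1. A one-weight linear code is minimal: if supp c' is contained
   in supp c, then c' - l c, with l chosen to cancel one coordinate, has smaller support than c and
   is therefore 0. In the extended code the codeword with coefficients cs is (cs_0 a, sum cs_i r_i),
   of weight n' [cs_0 ~= 0] + q^(m-1) [cs ~= 0]; this gives the weight distribution, minimality
   passes to the extension because the tail determines the coefficients, and
   w_min / w_max = q^(m-1) / (q^(m-1) + n') <= (q-1)/q because (q-1) n' >= q^(m-1). *)

section \<open>Vectors, weights and linear spans\<close>

lemma card_field_ge_2: "CARD('a::{finite,field}) \<ge> 2"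
  using card_mono[of "UNIV :: 'a set" "{0, 1}"] by simp

lemma finite_lists_UNIV: "finite {xs :: 'a::finite list. length xs = n}"
  using finite_lists_length_eq[of "UNIV :: 'a set" n] by simp

lemma card_lists_UNIV: "card {xs :: 'a::finite list. length xs = n} = CARD('a) ^ n"
  using card_lists_length_eq[of "UNIV :: 'a set" n] by simp

lemma card_lists_hd_in:
  "card {xs :: 'a::finite list. length xs = Suc k \<and> xs ! 0 \<in> S} = card S * CARD('a) ^ k"
proof -
  have "{xs :: 'a list. length xs = Suc k \<and> xs ! 0 \<in> S} = case_prod Cons ` (S \<times> {ys. length ys = k})"
    by (auto simp: length_Suc_conv)
  moreover have "inj_on (case_prod Cons) (S \<times> {ys :: 'a list. length ys = k})"
    by (auto simp: inj_on_def)
  ultimately show ?thesis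
    by (simp add: card_image card_cartesian_product card_lists_UNIV)
qed

lemma length_smul [simp]: "length (smul l v) = length v"
  by (simp add: smul_def)

lemma nth_smul [simp]: "i < length v \<Longrightarrow> smul l v ! i = l * v ! i"
  by (simp add: smul_def)

lemma smul_0_left: "smul 0 v = replicate (length v) 0"
  by (induct v) (simp_all add: smul_def)

lemma smul_append: "smul l (u @ v) = smul l u @ smul l v"
  by (simp add: smul_def)

lemma smul_smul: "smul l (smul l' v) = smul (l * l') v"
  by (simp add: smul_def)

lemma wt_eq_card_supp: "wt v = card (supp v)"
  by (simp add: wt_def supp_def length_filter_conv_card)

lemma wt_eq_0_iff: "wt v = 0 \<longleftrightarrow> v = replicate (length v) 0"
proof -
  have "wt v = 0 \<longleftrightarrow> (\<forall>x\<in>set v. x = 0)"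
    by (simp add: wt_def filter_empty_conv)
  then show ?thesis
    by (metis in_set_replicate replicate_length_same)
qed

lemma wt_append: "wt (u @ v) = wt u + wt v"
  by (simp add: wt_def)

lemma wt_smul_of_nonzero_entries:
  "\<forall>x\<in>set a. x \<noteq> 0 \<Longrightarrow> wt (smul c a) = (if c = 0 then 0 else length a)"
  by (auto simp: wt_def smul_def filter_map comp_def filter_id_conv)

lemma finite_supp [simp]: "finite (supp v)"
  by (simp add: supp_def)

lemma supp_nonempty_iff: "supp v \<noteq> {} \<longleftrightarrow> v \<noteq> replicate (length v) 0"
  using wt_eq_0_iff[of v] by (simp add: wt_eq_card_supp)

lemma supp_append: "supp (u @ v) = supp u \<union> (+) (length u) ` supp v"
proof (rule set_eqI)
  fix i
  show "i \<in> supp (u @ v) \<longleftrightarrow> i \<in> supp u \<union> (+) (length u) ` supp v"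
  proof (cases "i < length u")
    case False
    then obtain k where "i = length u + k"
      using le_Suc_ex not_less by blast
    then show ?thesis
      by (auto simp: supp_def nth_append)
  qed (force simp: supp_def nth_append)
qed

lemma supp_append_subset_cancel:
  assumes "length x = length y" "supp (x @ v) \<subseteq> supp (y @ u)"
  shows "supp v \<subseteq> supp u"
proof
  fix i assume "i \<in> supp v"
  then have "length y + i \<in> supp (y @ u)"
    using assms by (auto simp: supp_append)
  moreover have "length y + i \<notin> supp y"
    by (simp add: supp_def)
  ultimately show "i \<in> supp u"
    by (auto simp: supp_append)
qed

lemma length_lincomb [simp]: "length (lincomb N cs vs) = N"
  by (simp add: lincomb_def)

lemma nth_lincomb: "j < N \<Longrightarrow> lincomb N cs vs ! j = (\<Sum>i<length vs. cs ! i * vs ! i ! j)"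
  by (simp add: lincomb_def)

lemma lincomb_smul:
  "length cs = length vs \<Longrightarrow> lincomb N (smul l cs) vs = smul l (lincomb N cs vs)"
  by (auto simp: list_eq_iff_nth_eq nth_lincomb sum_distrib_left algebra_simps)

lemma lincomb_map2_diff_smul:
  assumes "length cs = length vs" "length cs' = length vs"
  shows "lincomb N (map2 (\<lambda>x y. x - l * y) cs cs') vs
           = map2 (\<lambda>x y. x - l * y) (lincomb N cs vs) (lincomb N cs' vs)"
  using assms
  by (auto simp: list_eq_iff_nth_eq nth_lincomb sum_subtractf sum_distrib_left algebra_simps)

lemma lincomb_replicate_0: "lincomb N (replicate (length vs) 0) vs = replicate N 0"
  by (simp add: list_eq_iff_nth_eq nth_lincomb)

lemma lspan_eq_image: "lspan N vs = (\<lambda>cs. lincomb N cs vs) ` {cs. length cs = length vs}"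
  by (auto simp: lspan_def)

lemma length_of_mem_lspan: "c \<in> lspan N vs \<Longrightarrow> length c = N"
  by (auto simp: lspan_def)

lemma map2_diff_smul_mem_lspan:
  assumes "u \<in> lspan N vs" "v \<in> lspan N vs"
  shows "map2 (\<lambda>x y. x - l * y) u v \<in> lspan N vs"
proof -
  obtain cs cs' where "length cs = length vs" "length cs' = length vs"
    and "u = lincomb N cs vs" "v = lincomb N cs' vs"
    using assms by (auto simp: lspan_def)
  then have "map2 (\<lambda>x y. x - l * y) u v = lincomb N (map2 (\<lambda>x y. x - l * y) cs cs') vs"
    by (simp add: lincomb_map2_diff_smul)
  moreover have "length (map2 (\<lambda>x y. x - l * y) cs cs') = length vs"
    using \<open>length cs = length vs\<close> \<open>length cs' = length vs\<close> by simp
  ultimately show ?thesis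
    unfolding lspan_def by blast
qed

lemma lincomb_unit:
  assumes "\<forall>v\<in>set vs. length v = N" "i < length vs"
  shows "lincomb N ((replicate (length vs) 0)[i := 1]) vs = vs ! i"
proof (rule nth_equalityI)
  fix j assume "j < length (lincomb N ((replicate (length vs) 0)[i := 1]) vs)"
  then have "lincomb N ((replicate (length vs) 0)[i := 1]) vs ! j
      = (\<Sum>k<length vs. (replicate (length vs) 0)[i := 1] ! k * vs ! k ! j)"
    by (simp add: nth_lincomb)
  also have "\<dots> = (\<Sum>k<length vs. if k = i then vs ! k ! j else 0)"
    by (intro sum.cong) (auto simp: nth_list_update)
  finally show "lincomb N ((replicate (length vs) 0)[i := 1]) vs ! j = vs ! i ! j"
    using assms(2) by simp
qed (use assms in auto)

lemma nth_mem_lspan: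
  assumes "\<forall>v\<in>set vs. length v = N" "i < length vs"
  shows "vs ! i \<in> lspan N vs"
  using lincomb_unit[OF assms] unfolding lspan_def
  by (metis (mono_tags, lifting) length_list_update length_replicate mem_Collect_eq)

lemma lin_indepD:
  "lin_indep N vs \<Longrightarrow> length cs = length vs \<Longrightarrow> lincomb N cs vs = replicate N 0 \<Longrightarrow> c \<in> set cs
    \<Longrightarrow> c = 0"
  by (simp add: lin_indep_def)

lemma lincomb_inj_on:
  assumes "lin_indep N vs"
  shows "inj_on (\<lambda>cs. lincomb N cs vs) {cs. length cs = length vs}"
proof (rule inj_onI)
  fix cs cs' assume "cs \<in> {cs. length cs = length vs}" "cs' \<in> {cs. length cs = length vs}"
    and eq: "lincomb N cs vs = lincomb N cs' vs"
  then have lengths: "length cs = length vs" "length cs' = length vs" by auto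
  have diff: "lincomb N (map2 (-) cs cs') vs = replicate N 0"
    using lincomb_map2_diff_smul[OF lengths, of N 1] eq by (simp add: list_eq_iff_nth_eq)
  have "cs ! i = cs' ! i" if "i < length vs" for i
  proof -
    have "map2 (-) cs cs' ! i = 0"
      using that lengths by (intro lin_indepD[OF assms _ diff] nth_mem) simp_all
    then show ?thesis
      using that lengths by simp
  qed
  then show "cs = cs'"
    using lengths by (simp add: list_eq_iff_nth_eq)
qed

lemma lincomb_eq_0_iff:
  assumes "lin_indep N vs" "length cs = length vs"
  shows "lincomb N cs vs = replicate N 0 \<longleftrightarrow> cs = replicate (length vs) 0"
  using inj_onD[OF lincomb_inj_on[OF assms(1)], of cs "replicate (length vs) 0"] assms(2)
  by (auto simp: lincomb_replicate_0)

lemma nth_neq_0_if_lin_indep: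
  assumes "lin_indep N vs" "\<forall>v\<in>set vs. length v = N" "i < length vs"
  shows "vs ! i \<noteq> replicate N 0"
proof
  assume "vs ! i = replicate N 0"
  then have "lincomb N ((replicate (length vs) 0)[i := 1]) vs = replicate N 0"
    using lincomb_unit[OF assms(2,3)] by simp
  moreover have "1 \<in> set ((replicate (length vs) 0)[i := 1])"
    using assms(3) by (simp add: set_update_memI)
  ultimately show False
    using lin_indepD[OF assms(1), of "(replicate (length vs) 0)[i := 1]" 1] by simp
qed

lemma card_lspan:
  "lin_indep N vs \<Longrightarrow> card (lspan N (vs :: 'a::{finite,field} list list)) = CARD('a) ^ length vs"
  by (simp add: lspan_eq_image card_image lincomb_inj_on card_lists_UNIV)

lemma card_eq_if_is_basis:
  fixes vs :: "'a::{finite,field} list list"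
  shows "is_basis N vs D \<Longrightarrow> card D = CARD('a) ^ length vs"
  by (auto simp: is_basis_def card_lspan)

lemma card_lspan_filter:
  assumes "lin_indep N vs"
  shows "card {c \<in> lspan N vs. P c} = card {cs. length cs = length vs \<and> P (lincomb N cs vs)}"
proof -
  have "{c \<in> lspan N vs. P c}
      = (\<lambda>cs. lincomb N cs vs) ` {cs. length cs = length vs \<and> P (lincomb N cs vs)}"
    by (auto simp: lspan_def)
  moreover have "inj_on (\<lambda>cs. lincomb N cs vs) {cs. length cs = length vs \<and> P (lincomb N cs vs)}"
    using lincomb_inj_on[OF assms] by (rule inj_on_subset) auto
  ultimately show ?thesis
    by (simp add: card_image)
qed

lemma length_eq_if_is_basis:
  fixes vs :: "'a::{finite,field} list list"
  assumes "is_basis N vs D" "is_basis N vs' D"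
  shows "length vs = length vs'"
  using card_eq_if_is_basis[OF assms(1)] card_eq_if_is_basis[OF assms(2)] card_field_ge_2[where 'a='a]
  by simp

section \<open>Codes of constant weight\<close>

lemma minimal_code_lspan_if_constant_weight:
  assumes const: "\<forall>c\<in>lspan N vs. c \<noteq> replicate N 0 \<longrightarrow> wt c = w"
  shows "minimal_code (lspan N vs)"
  unfolding minimal_code_def
proof (intro ballI impI)
  fix c c' assume c: "c \<in> lspan N vs" and c': "c' \<in> lspan N vs"
    and h: "c \<noteq> replicate (length c) 0 \<and> c' \<noteq> replicate (length c') 0 \<and> supp c' \<subseteq> supp c"
  have len: "length c = N" "length c' = N"
    using c c' by (simp_all add: length_of_mem_lspan)
  obtain j where j': "j \<in> supp c'"
    using h supp_nonempty_iff by blast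
  then have j: "j < N" "c' ! j \<noteq> 0" "c ! j \<noteq> 0"
    using h len by (auto simp: supp_def)
  define l where "l = c' ! j / c ! j"
  define d where "d = map2 (\<lambda>x y. x - l * y) c' c"
  have d: "d \<in> lspan N vs"
    unfolding d_def using c' c by (rule map2_diff_smul_mem_lspan)
  have nth_d: "d ! i = c' ! i - l * c ! i" if "i < N" for i
    using that len by (simp add: d_def)
  \<comment> \<open>d vanishes at j, so constant weight will force d = 0\<close>
  have "supp d \<subseteq> supp c - {j}"
  proof
    fix i assume "i \<in> supp d"
    then have i: "i < N" "d ! i \<noteq> 0"
      using d by (auto simp: supp_def length_of_mem_lspan)
    then have "c ! i \<noteq> 0"
      using h len nth_d by (auto simp: supp_def)
    moreover have "i \<noteq> j"
      using i nth_d j by (auto simp: l_def)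
    ultimately show "i \<in> supp c - {j}"
      using i len by (simp add: supp_def)
  qed
  then have "supp d \<subset> supp c"
    using j' h by blast
  then have "wt d < wt c"
    unfolding wt_eq_card_supp by (simp add: psubset_card_mono)
  moreover have "wt c = w"
    using const c h len by simp
  ultimately have "d = replicate N 0"
    using const d length_of_mem_lspan[OF d] by fastforce
  then have "c' = smul l c"
    using nth_d len by (auto simp: list_eq_iff_nth_eq)
  moreover have "l \<noteq> 0"
    using j by (simp add: l_def)
  ultimately show "\<exists>l. l \<noteq> 0 \<and> c' = smul l c"
    by blast
qed

lemma wmin_eq_Min: "wmin C = Min (wt ` C - {0})"
proof -
  have "{wt c |c. c \<in> C \<and> c \<noteq> replicate (length c) 0} = wt ` C - {0}"
    by (auto simp flip: wt_eq_0_iff)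
  then show ?thesis
    by (simp add: wmin_def)
qed

lemma wmax_eq_Max: "wmax C = Max (wt ` C)"
  by (simp add: wmax_def Setcompr_eq_image)

lemma mem_weights_if_card_pos: "0 < card {c \<in> C. wt c = t} \<Longrightarrow> t \<in> wt ` C"
  by (metis (mono_tags, lifting) card.empty empty_Collect_eq imageI less_irrefl mem_Collect_eq)

lemma wmin_wmax_if_weights:
  assumes "wt ` C = {0, w, w'}" "0 < w" "w \<le> w'"
  shows "wmin C = w" "wmax C = w'"
proof -
  have "wt ` C - {0} = {w, w'}"
    using assms by auto
  then show "wmin C = w"
    using assms(3) by (simp add: wmin_eq_Min)
  show "wmax C = w'"
    using assms by (simp add: wmax_eq_Max)
qed

lemma not_AB_condition_if:
  fixes C :: "'a::{finite,field} list set"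
  assumes "wmin C = w" "wmax C = w + n" "0 < w" "real w / real (CARD('a) - 1) \<le> real n"
  shows "\<not> AB_condition C"
proof -
  have "real w \<le> (real CARD('a) - 1) * real n"
    using assms(4) card_field_ge_2[where 'a='a] by (simp add: of_nat_diff field_simps)
  then have "real w * real CARD('a) \<le> (real CARD('a) - 1) * (real w + real n)"
    by (simp add: algebra_simps)
  moreover have "0 < real w + real n" "0 < real CARD('a)"
    using assms(3) by auto
  ultimately have "real w / (real w + real n) \<le> (real CARD('a) - 1) / real CARD('a)"
    by (simp add: frac_le_eq divide_nonpos_pos mult.commute)
  then show ?thesis
    using assms(1,2) by (simp add: AB_condition_def)
qed

lemma ext_len_if_constant_weight:
  fixes D :: "'a::{finite,field} list set"
  assumes "wmin D = w" "wmax D = w"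
  shows "ext_len D = \<lceil>real w / real (CARD('a) - 1)\<rceil>"
proof -
  have "real CARD('a) * real w / (real CARD('a) - 1) = real w / real (CARD('a) - 1) + of_int (int w)"
    using card_field_ge_2[where 'a='a] by (simp add: of_nat_diff field_simps)
  then show ?thesis
    using assms unfolding ext_len_def by (simp only: ceiling_add_of_int)
qed

section \<open>The extension construction\<close>

definition ext_generators :: "'a::zero list \<Rightarrow> 'a list list \<Rightarrow> 'a list list" where
  "ext_generators a rs = (a @ rs ! 0) # map (\<lambda>r. replicate (length a) 0 @ r) (tl rs)"

lemma length_ext_generators: "rs \<noteq> [] \<Longrightarrow> length (ext_generators a rs) = length rs"
  by (simp add: ext_generators_def)

lemma nth_ext_generators:
  "i < length rs \<Longrightarrow> ext_generators a rs ! i = (if i = 0 then a else replicate (length a) 0) @ rs ! i"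
  by (cases rs; cases i) (auto simp: ext_generators_def)

lemma lincomb_ext_generators:
  assumes "rs \<noteq> []" "\<forall>r\<in>set rs. length r = N" "length cs = length rs"
  shows "lincomb (length a + N) cs (ext_generators a rs) = smul (cs ! 0) a @ lincomb N cs rs"
proof (rule nth_equalityI)
  fix j assume "j < length (lincomb (length a + N) cs (ext_generators a rs))"
  then have j: "j < length a + N" by simp
  have lincomb_j: "lincomb (length a + N) cs (ext_generators a rs) ! j
      = (\<Sum>i<length rs. cs ! i * ((if i = 0 then a else replicate (length a) 0) @ rs ! i) ! j)"
    using j assms(1) by (simp add: nth_lincomb length_ext_generators nth_ext_generators)
  show "lincomb (length a + N) cs (ext_generators a rs) ! j = (smul (cs ! 0) a @ lincomb N cs rs) ! j"
  proof (cases "j < length a")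
    case True
    have "(\<Sum>i<length rs. cs ! i * ((if i = 0 then a else replicate (length a) 0) @ rs ! i) ! j)
        = (\<Sum>i<length rs. if i = 0 then cs ! 0 * a ! j else 0)"
      using True by (intro sum.cong) (auto simp: nth_append)
    then show ?thesis
      using True assms(1) lincomb_j by (simp add: nth_append)
  next
    case False
    have "(\<Sum>i<length rs. cs ! i * ((if i = 0 then a else replicate (length a) 0) @ rs ! i) ! j)
        = (\<Sum>i<length rs. cs ! i * rs ! i ! (j - length a))"
      using False by (intro sum.cong) (auto simp: nth_append)
    then show ?thesis
      using False j lincomb_j by (simp add: nth_append nth_lincomb)
  qed
qed simp

lemma lspan_ext_generators:
  assumes "rs \<noteq> []" "\<forall>r\<in>set rs. length r = N"
  shows "lspan (length a + N) (ext_generators a rs)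
    = (\<lambda>cs. smul (cs ! 0) a @ lincomb N cs rs) ` {cs. length cs = length rs}"
  using lincomb_ext_generators[OF assms] by (auto simp: lspan_eq_image length_ext_generators[OF assms(1)])

lemma is_basis_ext_generators:
  assumes "rs \<noteq> []" "\<forall>r\<in>set rs. length r = N" "lin_indep N rs"
  shows "is_basis (length a + N) (ext_generators a rs) (lspan (length a + N) (ext_generators a rs))"
  unfolding is_basis_def
proof (intro conjI)
  show "\<forall>v\<in>set (ext_generators a rs). length v = length a + N"
    using assms(1,2) by (auto simp: ext_generators_def dest: list.set_sel)
  show "lin_indep (length a + N) (ext_generators a rs)"
    unfolding lin_indep_def
  proof (intro allI impI)
    fix cs assume cs: "length cs = length (ext_generators a rs)
      \<and> lincomb (length a + N) cs (ext_generators a rs) = replicate (length a + N) 0"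
    then have len: "length cs = length rs"
      using length_ext_generators[OF assms(1)] by simp
    have "smul (cs ! 0) a @ lincomb N cs rs = lincomb (length a + N) cs (ext_generators a rs)"
      using lincomb_ext_generators[OF assms(1,2) len] by simp
    also have "\<dots> = replicate (length a) 0 @ replicate N 0"
      using cs by (simp add: replicate_add)
    finally have "lincomb N cs rs = replicate N 0"
      by simp
    then show "\<forall>c\<in>set cs. c = 0"
      using len lincomb_eq_0_iff[OF assms(3)] by simp
  qed
qed simp

lemma minimal_code_ext_generators:
  assumes rs: "rs \<noteq> []" "\<forall>r\<in>set rs. length r = N" and indep: "lin_indep N rs"
    and minimal: "minimal_code (lspan N rs)"
  shows "minimal_code (lspan (length a + N) (ext_generators a rs))"
proof -
  define E where "E cs = smul (cs ! 0) a @ lincomb N cs rs" for cs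
  have span: "lspan (length a + N) (ext_generators a rs) = E ` {cs. length cs = length rs}"
    using lspan_ext_generators[OF rs] by (simp add: E_def)
  have E_smul: "E (smul l cs) = smul l (E cs)" if "length cs = length rs" for l cs
    using that rs(1) by (simp add: E_def lincomb_smul smul_append smul_smul)
  have lincomb_nonzero: "lincomb N cs rs \<noteq> replicate N 0"
    if "length cs = length rs" "E cs \<noteq> replicate (length (E cs)) 0" for cs
    using that lincomb_eq_0_iff[OF indep] rs(1)
    by (auto simp: E_def smul_0_left lincomb_replicate_0 replicate_add)
  show ?thesis
    unfolding minimal_code_def
  proof (intro ballI impI)
    fix c c' assume "c \<in> lspan (length a + N) (ext_generators a rs)"
      "c' \<in> lspan (length a + N) (ext_generators a rs)"
    then obtain cs cs' where cs: "length cs = length rs" "c = E cs"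
      and cs': "length cs' = length rs" "c' = E cs'"
      unfolding span by blast
    assume h: "c \<noteq> replicate (length c) 0 \<and> c' \<noteq> replicate (length c') 0 \<and> supp c' \<subseteq> supp c"
    have in_span: "lincomb N cs rs \<in> lspan N rs" "lincomb N cs' rs \<in> lspan N rs"
      using cs cs' by (auto simp: lspan_def)
    have "lincomb N cs rs \<noteq> replicate N 0" "lincomb N cs' rs \<noteq> replicate N 0"
      using h cs cs' lincomb_nonzero by simp_all
    moreover have "supp (lincomb N cs' rs) \<subseteq> supp (lincomb N cs rs)"
      using h cs cs' supp_append_subset_cancel[of "smul (cs' ! 0) a" "smul (cs ! 0) a"]
      by (simp add: E_def)
    ultimately obtain l where l: "l \<noteq> 0" "lincomb N cs' rs = smul l (lincomb N cs rs)"
      using minimal[unfolded minimal_code_def, rule_format, OF in_span] by auto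
    then have "cs' = smul l cs"
      using inj_onD[OF lincomb_inj_on[OF indep]] cs cs' by (simp add: lincomb_smul)
    then have "c' = smul l c"
      using cs cs' E_smul by simp
    then show "\<exists>l. l \<noteq> 0 \<and> c' = smul l c"
      using l(1) by blast
  qed
qed

lemma wt_lincomb_ext_generators:
  assumes rs: "rs \<noteq> []" "\<forall>r\<in>set rs. length r = N" and indep: "lin_indep N rs"
    and a: "\<forall>x\<in>set a. x \<noteq> 0"
    and const: "\<forall>c\<in>lspan N rs. c \<noteq> replicate N 0 \<longrightarrow> wt c = w"
    and cs: "length cs = length rs"
  shows "wt (lincomb (length a + N) cs (ext_generators a rs))
    = (if cs ! 0 = 0 then 0 else length a) + (if cs = replicate (length rs) 0 then 0 else w)"
proof -
  have "lincomb N cs rs \<in> lspan N rs"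
    using cs by (auto simp: lspan_def)
  then have "wt (lincomb N cs rs) = (if cs = replicate (length rs) 0 then 0 else w)"
    using const lincomb_eq_0_iff[OF indep cs] wt_eq_0_iff[of "lincomb N cs rs"] by auto
  then show ?thesis
    using a by (simp add: lincomb_ext_generators[OF rs cs] wt_append wt_smul_of_nonzero_entries)
qed

lemma weight_distribution_ext_generators:
  fixes a :: "'a::{finite,field} list"
  assumes rs: "length rs = Suc k" "\<forall>r\<in>set rs. length r = N" and indep: "lin_indep N rs"
    and a: "\<forall>x\<in>set a. x \<noteq> 0" "a \<noteq> []"
    and const: "\<forall>c\<in>lspan N rs. c \<noteq> replicate N 0 \<longrightarrow> wt c = w" and "0 < w"
  defines "C \<equiv> lspan (length a + N) (ext_generators a rs)"
  shows "wt ` C \<subseteq> {0, w, w + length a}"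
    and "card {c \<in> C. wt c = 0} = 1"
    and "card {c \<in> C. wt c = w} = CARD('a) ^ k - 1"
    and "card {c \<in> C. wt c = w + length a} = (CARD('a) - 1) * CARD('a) ^ k"
proof -
  let ?G = "ext_generators a rs"
  have "rs \<noteq> []"
    using rs(1) by auto
  have G: "length ?G = Suc k" "lin_indep (length a + N) ?G"
    using is_basis_ext_generators[OF \<open>rs \<noteq> []\<close> rs(2) indep] length_ext_generators[OF \<open>rs \<noteq> []\<close>] rs(1)
    by (simp_all add: is_basis_def)
  have wt_G: "wt (lincomb (length a + N) cs ?G)
      = (if cs ! 0 = 0 then 0 else length a) + (if cs = replicate (Suc k) 0 then 0 else w)"
    if "length cs = Suc k" for cs
    using wt_lincomb_ext_generators[OF \<open>rs \<noteq> []\<close> rs(2) indep a(1) const] that rs(1) by simp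
  have weight_0: "wt (lincomb (length a + N) cs ?G) = 0 \<longleftrightarrow> cs = replicate (Suc k) 0"
    and weight_w: "wt (lincomb (length a + N) cs ?G) = w \<longleftrightarrow> cs ! 0 = 0 \<and> cs \<noteq> replicate (Suc k) 0"
    and weight_w_n: "wt (lincomb (length a + N) cs ?G) = w + length a \<longleftrightarrow> cs ! 0 \<noteq> 0"
    if "length cs = Suc k" for cs
    using wt_G[OF that] \<open>0 < w\<close> a(2)
    by (cases "cs ! 0 = 0"; cases "cs = replicate (Suc k) 0"; simp)+
  have card_class: "card {c \<in> C. wt c = t}
      = card {cs. length cs = Suc k \<and> wt (lincomb (length a + N) cs ?G) = t}" for t
    unfolding C_def using card_lspan_filter[OF G(2)] G(1) by simp
  show "wt ` C \<subseteq> {0, w, w + length a}"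
    unfolding C_def lspan_eq_image using wt_G G(1) by auto
  have "{cs. length cs = Suc k \<and> wt (lincomb (length a + N) cs ?G) = 0} = {replicate (Suc k) 0}"
    using weight_0 by auto
  then show "card {c \<in> C. wt c = 0} = 1"
    using card_class by simp
  have "{cs. length cs = Suc k \<and> wt (lincomb (length a + N) cs ?G) = w}
      = {cs. length cs = Suc k \<and> cs ! 0 \<in> {0}} - {replicate (Suc k) 0}"
    using weight_w by auto
  moreover have "finite {cs :: 'a list. length cs = Suc k \<and> cs ! 0 \<in> {0}}"
    using finite_lists_UNIV by (rule rev_finite_subset) auto
  ultimately show "card {c \<in> C. wt c = w} = CARD('a) ^ k - 1"
    using card_class card_lists_hd_in[of k "{0 :: 'a}"] by (simp add: card_Diff_singleton)
  have "{cs. length cs = Suc k \<and> wt (lincomb (length a + N) cs ?G) = w + length a}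
      = {cs. length cs = Suc k \<and> cs ! 0 \<in> UNIV - {0}}"
    using weight_w_n by auto
  then show "card {c \<in> C. wt c = w + length a} = (CARD('a) - 1) * CARD('a) ^ k"
    using card_class card_lists_hd_in[of k "UNIV - {0 :: 'a}"] by (simp add: card_Diff_singleton)
qed

lemma wmin_wmax_ext_generators:
  fixes a :: "'a::{finite,field} list"
  assumes rs: "length rs = Suc k" "\<forall>r\<in>set rs. length r = N" and indep: "lin_indep N rs"
    and a: "\<forall>x\<in>set a. x \<noteq> 0" "a \<noteq> []"
    and const: "\<forall>c\<in>lspan N rs. c \<noteq> replicate N 0 \<longrightarrow> wt c = w" and "0 < w" and "1 \<le> k"
  defines "C \<equiv> lspan (length a + N) (ext_generators a rs)"
  shows "wmin C = w" "wmax C = w + length a"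
proof -
  note distribution = weight_distribution_ext_generators[OF assms(1-7), folded C_def]
  have "1 < CARD('a) ^ k"
    using card_field_ge_2[where 'a='a] \<open>1 \<le> k\<close> by (intro one_less_power) auto
  then have "{0, w, w + length a} \<subseteq> wt ` C"
    using distribution(2-4) mem_weights_if_card_pos[of C] card_field_ge_2[where 'a='a] by simp
  then have "wt ` C = {0, w, w + length a}"
    using distribution(1) by blast
  then show "wmin C = w" "wmax C = w + length a"
    using wmin_wmax_if_weights[of C w "w + length a"] \<open>0 < w\<close> by simp_all
qed

lemma is_extension_of_constant_weightE:
  fixes D C' :: "'a::{finite,field} list set"
  assumes ext: "is_extension N D C'" and basis: "is_basis N vs D"
    and const: "\<forall>c\<in>D. c \<noteq> replicate N 0 \<longrightarrow> wt c = w"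
  obtains rs a where "is_basis N rs D" "length rs = length vs" "0 < w"
    "\<forall>x\<in>set a. x \<noteq> 0" "a \<noteq> []" "length a = nat \<lceil>real w / real (CARD('a) - 1)\<rceil>"
    "C' = lspan (length a + N) (ext_generators a rs)"
proof -
  obtain rs a where rs: "is_basis N rs D" "length rs \<ge> 2" "wt (rs ! 0) = wmax D" "wt (rs ! 1) = wmin D"
    and a: "length a = nat (ext_len D)" "ext_len D \<ge> 1" "\<forall>x\<in>set a. x \<noteq> 0"
    and C': "C' = lspan (length a + N) (ext_generators a rs)"
    using ext unfolding is_extension_def ext_generators_def by blast
  have rs_len: "\<forall>r\<in>set rs. length r = N" and indep: "lin_indep N rs" and D: "D = lspan N rs"
    using rs(1) by (auto simp: is_basis_def)
  have weight_rs: "wt (rs ! i) = w" "wt (rs ! i) > 0" if "i < length rs" for i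
    using const nth_mem_lspan[OF rs_len that] nth_neq_0_if_lin_indep[OF indep rs_len that]
      nth_mem[OF that] rs_len D wt_eq_0_iff[of "rs ! i"] by auto
  then have "wmax D = w" "wmin D = w" "0 < w"
    using rs(2-4) by fastforce+
  moreover have "a \<noteq> []"
    using a(1,2) by auto
  ultimately show ?thesis
    using that rs(1) length_eq_if_is_basis[OF rs(1) basis] a(1,3) C'
    by (simp add: ext_len_if_constant_weight)
qed

theorem extension_of_constant_weight_code:
  fixes D C' :: "'a::{finite,field} list set" and w :: nat
  defines "q \<equiv> CARD('a)"
  defines "n \<equiv> nat \<lceil>real w / real (q - 1)\<rceil>"
  assumes ext: "is_extension N D C'"
    and basis: "is_basis N vs D" "length vs = Suc k" "1 \<le> k"
    and const: "\<forall>c\<in>D. c \<noteq> replicate N 0 \<longrightarrow> wt c = w"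
  shows "linear_code (N + n) (Suc k) w C' \<and> minimal_code C' \<and> \<not> AB_condition C'
    \<and> card {c \<in> C'. wt c = 0} = 1
    \<and> card {c \<in> C'. wt c = w} = q ^ k - 1
    \<and> card {c \<in> C'. wt c = w + n} = (q - 1) * q ^ k"
proof -
  obtain rs a where rs: "is_basis N rs D" "length rs = Suc k" and "0 < w"
    and a: "\<forall>x\<in>set a. x \<noteq> 0" "a \<noteq> []" "length a = n"
    and C': "C' = lspan (length a + N) (ext_generators a rs)"
    using is_extension_of_constant_weightE[OF ext basis(1) const] basis(2) unfolding n_def q_def
    by metis
  have rs_len: "\<forall>r\<in>set rs. length r = N" and indep: "lin_indep N rs" and D: "D = lspan N rs"
    and "rs \<noteq> []"
    using rs by (auto simp: is_basis_def)
  note hyps = rs(2) rs_len indep a(1,2) const[unfolded D] \<open>0 < w\<close>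
  have weights: "wmin C' = w" "wmax C' = w + n"
    using wmin_wmax_ext_generators[OF hyps basis(3)] C' a(3) by simp_all
  have "\<not> AB_condition C'"
    using not_AB_condition_if[OF weights \<open>0 < w\<close>] real_nat_ceiling_ge by (simp add: n_def q_def)
  moreover have "linear_code (N + n) (Suc k) w C'"
    using is_basis_ext_generators[OF \<open>rs \<noteq> []\<close> rs_len indep, of a] length_ext_generators[OF \<open>rs \<noteq> []\<close>]
      rs(2) weights(1) C' a(3) unfolding linear_code_def by (metis add.commute)
  moreover have "minimal_code C'"
    using minimal_code_ext_generators[OF \<open>rs \<noteq> []\<close> rs_len indep
        minimal_code_lspan_if_constant_weight[OF const[unfolded D]]] C' by simp
  ultimately show ?thesis
    using weight_distribution_ext_generators[OF hyps] C' a(3) by (simp add: q_def)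
qed

section \<open>The simplex code\<close>

definition dot :: "nat \<Rightarrow> 'a::field list \<Rightarrow> 'a list \<Rightarrow> 'a" where
  "dot m u v = (\<Sum>i<m. u ! i * v ! i)"

lemma dot_smul_right: "length v = m \<Longrightarrow> dot m u (smul l v) = l * dot m u v"
  by (simp add: dot_def sum_distrib_left algebra_simps)

lemma dot_replicate_0_left: "dot m (replicate m 0) v = 0"
  by (simp add: dot_def)

lemma dot_replicate_0_right: "dot m u (replicate m 0) = 0"
  by (simp add: dot_def)

lemma dot_add_smul_right:
  "length v = m \<Longrightarrow> length w = m \<Longrightarrow> dot m u (map2 (\<lambda>x y. x + t * y) v w) = dot m u v + t * dot m u w"
  by (simp add: dot_def sum.distrib sum_distrib_left algebra_simps)

lemma exists_dot_eq_1:
  assumes "length u = m" "u \<noteq> replicate m 0"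
  obtains w where "length w = m" "dot m u w = 1"
proof -
  obtain k where k: "k < m" "u ! k \<noteq> 0"
    using assms by (auto simp: list_eq_iff_nth_eq)
  define w where "w = (replicate m 0)[k := inverse (u ! k)]"
  have "dot m u w = (\<Sum>i<m. if i = k then u ! k * inverse (u ! k) else 0)"
    unfolding dot_def w_def by (intro sum.cong) (auto simp: nth_list_update)
  then have "dot m u w = 1"
    using k by simp
  then show ?thesis
    using that[of w] by (simp add: w_def)
qed

lemma card_dot_eq_0:
  fixes u :: "'a::{finite,field} list"
  assumes "length u = m" "u \<noteq> replicate m 0"
  shows "CARD('a) * card {v. length v = m \<and> dot m u v = 0} = CARD('a) ^ m"
proof -
  obtain w where w: "length w = m" "dot m u w = 1"
    using exists_dot_eq_1[OF assms] .
  define K where "K = {v. length v = m \<and> dot m u v = 0}"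
  define f where "f = (\<lambda>(t, v). map2 (\<lambda>x y. x + t * y) v w)"
  define g where "g = (\<lambda>v. (dot m u v, map2 (\<lambda>x y. x + - dot m u v * y) v w))"
  \<comment> \<open>a vector is uniquely its component along w plus a vector of the hyperplane K\<close>
  have "bij_betw f ((UNIV :: 'a set) \<times> K) {v. length v = m}"
  proof (rule bij_betw_byWitness[where f' = g])
    show "f ` (UNIV \<times> K) \<subseteq> {v. length v = m}"
      using w by (auto simp: f_def K_def)
    show "g ` {v. length v = m} \<subseteq> UNIV \<times> K"
    proof
      fix p assume "p \<in> g ` {v. length v = m}"
      then obtain v where "length v = m" "p = g v"
        by blast
      then show "p \<in> UNIV \<times> K"
        using w dot_add_smul_right[of v m w u "- dot m u v"] by (simp add: g_def K_def)
    qed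
    show "\<forall>p\<in>UNIV \<times> K. g (f p) = p"
      using w by (auto simp: f_def g_def K_def dot_add_smul_right list_eq_iff_nth_eq)
    show "\<forall>v\<in>{v. length v = m}. f (g v) = v"
      using w by (auto simp: f_def g_def list_eq_iff_nth_eq)
  qed
  then have "card ((UNIV :: 'a set) \<times> K) = card {v :: 'a list. length v = m}"
    by (rule bij_betw_same_card)
  then show ?thesis
    by (simp add: K_def card_cartesian_product card_lists_UNIV)
qed

lemma smul_eq_replicate_0_iff:
  "smul l v = replicate (length v) 0 \<longleftrightarrow> l = 0 \<or> v = replicate (length v) 0"
  by (auto simp: list_eq_iff_nth_eq)

lemma smul_eq_smul_imp:
  assumes "l \<noteq> 0" "smul l v = smul l' v'"
  shows "v = smul (l' / l) v'"
proof -
  have "length v = length v'"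
    using arg_cong[OF assms(2), of length] by simp
  then show ?thesis
    using assms by (auto simp: list_eq_iff_nth_eq field_simps dest: arg_cong[of _ _ "\<lambda>v. v ! _"])
qed

lemma smul_right_cancel:
  assumes "v \<noteq> replicate (length v) 0" "smul l v = smul l' v"
  shows "l = l'"
proof -
  obtain i where "i < length v" "v ! i \<noteq> 0"
    using assms(1) by (auto simp: list_eq_iff_nth_eq)
  then show ?thesis
    using arg_cong[OF assms(2), of "\<lambda>v. v ! i"] by simp
qed

lemma bij_betw_simplex_columns:
  fixes cols :: "'a::{finite,field} list list"
  assumes "simplex_columns m cols"
  shows "bij_betw (\<lambda>(j, l). smul l (cols ! j)) ({..<length cols} \<times> (UNIV - {0}))
    {v. length v = m \<and> v \<noteq> replicate m 0}"
proof (rule bij_betw_imageI)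
  have cols: "\<And>j. j < length cols \<Longrightarrow> length (cols ! j) = m \<and> cols ! j \<noteq> replicate m 0"
    and distinct: "\<And>i j l. i < length cols \<Longrightarrow> j < length cols \<Longrightarrow> i \<noteq> j \<Longrightarrow> cols ! i \<noteq> smul l (cols ! j)"
    and cover: "\<And>v. length v = m \<Longrightarrow> v \<noteq> replicate m 0 \<Longrightarrow> \<exists>c\<in>set cols. \<exists>l. v = smul l c"
    using assms unfolding simplex_columns_def by (blast dest: nth_mem)+
  show "inj_on (\<lambda>(j, l). smul l (cols ! j)) ({..<length cols} \<times> (UNIV - {0}))"
  proof (rule inj_onI)
    fix p p' assume "p \<in> {..<length cols} \<times> (UNIV - {0})" "p' \<in> {..<length cols} \<times> (UNIV - {0})"
      and "(\<lambda>(j, l). smul l (cols ! j)) p = (\<lambda>(j, l). smul l (cols ! j)) p'"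
    then obtain j l j' l' where p: "p = (j, l)" "p' = (j', l')"
      and j: "j < length cols" "l \<noteq> 0" "j' < length cols"
      and eq: "smul l (cols ! j) = smul l' (cols ! j')"
      by auto
    then have "j = j'"
      using distinct smul_eq_smul_imp by blast
    then show "p = p'"
      using p eq cols[OF j(1)] smul_right_cancel[of "cols ! j" l l'] by simp
  qed
  show "(\<lambda>(j, l). smul l (cols ! j)) ` ({..<length cols} \<times> (UNIV - {0}))
      = {v. length v = m \<and> v \<noteq> replicate m 0}"
  proof (intro equalityI subsetI)
    fix v assume "v \<in> (\<lambda>(j, l). smul l (cols ! j)) ` ({..<length cols} \<times> (UNIV - {0}))"
    then show "v \<in> {v. length v = m \<and> v \<noteq> replicate m 0}"
      using cols smul_eq_replicate_0_iff by fastforce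
  next
    fix v :: "'a list" assume "v \<in> {v. length v = m \<and> v \<noteq> replicate m 0}"
    then obtain j l where "j < length cols" "v = smul l (cols ! j)" "length v = m" "v \<noteq> replicate m 0"
      using cover by (fastforce simp: in_set_conv_nth)
    moreover from this have "l \<noteq> 0"
      using smul_0_left by fastforce
    ultimately show "v \<in> (\<lambda>(j, l). smul l (cols ! j)) ` ({..<length cols} \<times> (UNIV - {0}))"
      by auto
  qed
qed

lemma card_simplex_columns_filter:
  fixes cols :: "'a::{finite,field} list list"
  assumes sc: "simplex_columns m cols"
    and P: "\<And>l v. l \<noteq> 0 \<Longrightarrow> length v = m \<Longrightarrow> P (smul l v) = P v"
  shows "card {j. j < length cols \<and> P (cols ! j)} * (CARD('a) - 1)
    = card {v. length v = m \<and> v \<noteq> replicate m 0 \<and> P v}"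
proof -
  let ?f = "\<lambda>(j, l). smul l (cols ! j)"
  let ?J = "{j. j < length cols \<and> P (cols ! j)}"
  have bij: "bij_betw ?f ({..<length cols} \<times> (UNIV - {0})) {v. length v = m \<and> v \<noteq> replicate m 0}"
    using bij_betw_simplex_columns[OF sc] .
  have P_col: "P (smul l (cols ! j)) = P (cols ! j)" if "j < length cols" "l \<noteq> 0" for j l
    using P[OF that(2)] sc that(1) unfolding simplex_columns_def by (blast dest: nth_mem)
  have "?f ` (?J \<times> (UNIV - {0})) = {v \<in> ?f ` ({..<length cols} \<times> (UNIV - {0})). P v}"
    using P_col by fastforce
  also have "\<dots> = {v. length v = m \<and> v \<noteq> replicate m 0 \<and> P v}"
    using bij_betw_imp_surj_on[OF bij] by blast
  finally have image: "?f ` (?J \<times> (UNIV - {0})) = {v. length v = m \<and> v \<noteq> replicate m 0 \<and> P v}" .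
  have "inj_on ?f (?J \<times> (UNIV - {0}))"
    by (rule inj_on_subset[OF bij_betw_imp_inj_on[OF bij]]) auto
  then have "card (?J \<times> (UNIV - {0 :: 'a})) = card {v. length v = m \<and> v \<noteq> replicate m 0 \<and> P v}"
    by (simp add: card_image flip: image)
  then show ?thesis
    by (simp add: card_cartesian_product card_Diff_singleton)
qed

lemma length_simplex_columns:
  fixes cols :: "'a::{finite,field} list list"
  assumes "simplex_columns m cols"
  shows "length cols * (CARD('a) - 1) = CARD('a) ^ m - 1"
proof -
  have "{v :: 'a list. length v = m \<and> v \<noteq> replicate m 0} = {v. length v = m} - {replicate m 0}"
    by auto
  then show ?thesis
    using card_simplex_columns_filter[OF assms, of "\<lambda>_. True"] finite_lists_UNIV[where 'a='a]
    by (simp add: card_Diff_singleton card_lists_UNIV)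
qed

lemma wt_simplex_codeword:
  fixes cols :: "'a::{finite,field} list list"
  assumes sc: "simplex_columns m cols" and u: "length u = m" "u \<noteq> replicate m 0"
  shows "wt (map (dot m u) cols) = CARD('a) ^ (m - 1)"
proof -
  let ?q = "CARD('a)"
  obtain k where m: "m = Suc k"
    using u by (cases m) auto
  have hyperplane: "card {v :: 'a list. length v = m \<and> dot m u v = 0} = ?q ^ k"
    using card_dot_eq_0[OF u] m by simp
  have "wt (map (dot m u) cols) * (?q - 1) = card {j. j < length cols \<and> dot m u (cols ! j) \<noteq> 0} * (?q - 1)"
    by (simp add: wt_def length_filter_conv_card cong: conj_cong)
  also have "\<dots> = card {v. length v = m \<and> v \<noteq> replicate m 0 \<and> dot m u v \<noteq> 0}"
    by (rule card_simplex_columns_filter[OF sc]) (simp add: dot_smul_right)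
  also have "\<dots> = card {v. length v = m \<and> dot m u v \<noteq> 0}"
    using dot_replicate_0_right[of m u] by (intro arg_cong[where f = card] Collect_cong) auto
  also have "\<dots> = card ({v. length v = m} - {v. length v = m \<and> dot m u v = 0})"
    by (intro arg_cong[where f = card]) blast
  also have "\<dots> = ?q ^ m - ?q ^ k"
    by (subst card_Diff_subset) (auto simp: hyperplane card_lists_UNIV finite_lists_UNIV
        intro: rev_finite_subset[OF finite_lists_UNIV])
  also have "\<dots> = ?q ^ k * (?q - 1)"
    using m by (simp add: diff_mult_distrib2 mult.commute)
  finally show ?thesis
    using card_field_ge_2[where 'a='a] m by simp
qed

lemma lincomb_simplex_rows:
  "lincomb (length cols) u (map (\<lambda>i. map (\<lambda>c. c ! i) cols) [0..<m]) = map (dot m u) cols"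
  by (simp add: list_eq_iff_nth_eq nth_lincomb dot_def mult.commute)

lemma gen_code_eq_image: "gen_code m cols = (\<lambda>u. map (dot m u) cols) ` {u. length u = m}"
  by (auto simp: gen_code_def lspan_def lincomb_simplex_rows)

lemma simplex_code_constant_weight:
  fixes cols :: "'a::{finite,field} list list"
  assumes "simplex_columns m cols"
  shows "\<forall>c\<in>gen_code m cols. c \<noteq> replicate (length cols) 0 \<longrightarrow> wt c = CARD('a) ^ (m - 1)"
proof (intro ballI impI)
  fix c assume "c \<in> gen_code m cols" "c \<noteq> replicate (length cols) 0"
  obtain u where u: "length u = m" "c = map (dot m u) cols"
    using \<open>c \<in> gen_code m cols\<close> by (auto simp: gen_code_eq_image)
  have "u \<noteq> replicate m 0"
  proof
    assume "u = replicate m 0"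
    then have "dot m u v = 0" for v
      by (simp add: dot_replicate_0_left)
    then have "c = replicate (length cols) 0"
      using u(2) by (simp add: list_eq_iff_nth_eq)
    then show False
      using \<open>c \<noteq> replicate (length cols) 0\<close> by contradiction
  qed
  then show "wt c = CARD('a) ^ (m - 1)"
    using wt_simplex_codeword[OF assms u(1)] u(2) by simp
qed

lemma is_basis_simplex_rows:
  fixes cols :: "'a::{finite,field} list list"
  assumes "simplex_columns m cols"
  shows "is_basis (length cols) (map (\<lambda>i. map (\<lambda>c. c ! i) cols) [0..<m]) (gen_code m cols)"
  unfolding is_basis_def
proof (intro conjI)
  show "lin_indep (length cols) (map (\<lambda>i. map (\<lambda>c. c ! i) cols) [0..<m])"
    unfolding lin_indep_def
  proof (intro allI impI)
    fix u :: "'a list"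
    assume "length u = length (map (\<lambda>i. map (\<lambda>c. c ! i) cols) [0..<m])
      \<and> lincomb (length cols) u (map (\<lambda>i. map (\<lambda>c. c ! i) cols) [0..<m]) = replicate (length cols) 0"
    then have "length u = m" "wt (map (dot m u) cols) = 0"
      by (simp_all add: lincomb_simplex_rows wt_def)
    have "u = replicate m 0"
    proof (rule ccontr)
      assume "u \<noteq> replicate m 0"
      then have "wt (map (dot m u) cols) = CARD('a) ^ (m - 1)"
        using wt_simplex_codeword[OF assms \<open>length u = m\<close>] by simp
      then show False
        using \<open>wt (map (dot m u) cols) = 0\<close> by simp
    qed
    then show "\<forall>c\<in>set u. c = 0"
      by simp
  qed
qed (auto simp: gen_code_def)

theorem proposition6p1:
  fixes cols :: "'a::{finite,field} list list" and m :: nat and C' :: "'a list set"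
  defines "q \<equiv> CARD('a)"
  defines "n' \<equiv> nat \<lceil>real (q ^ (m - 1)) / real (q - 1)\<rceil>"
  assumes "m \<ge> 2"
    and "simplex_columns m cols"
    and "is_extension (length cols) (gen_code m cols) C'"
  shows "linear_code ((q ^ m - 1) div (q - 1) + n') m (q ^ (m - 1)) C'
    \<and> minimal_code C'
    \<and> \<not> AB_condition C'
    \<and> card {c \<in> C'. wt c = 0} = 1
    \<and> card {c \<in> C'. wt c = q ^ (m - 1)} = q ^ (m - 1) - 1
    \<and> card {c \<in> C'. wt c = q ^ (m - 1) + n'} = (q - 1) * q ^ (m - 1)"
proof -
  obtain k where m: "m = Suc k" "1 \<le> k"
    using \<open>m \<ge> 2\<close> by (cases m) auto
  have "length cols * (q - 1) = q ^ m - 1" "0 < q - 1"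
    using length_simplex_columns[OF assms(4)] card_field_ge_2[where 'a='a] by (simp_all add: q_def)
  then have "(q ^ m - 1) div (q - 1) = length cols"
    by (metis nonzero_mult_div_cancel_right neq0_conv)
  moreover have "length (map (\<lambda>i. map (\<lambda>c. c ! i) cols) [0..<m]) = Suc k"
    using m by simp
  ultimately show ?thesis
    using extension_of_constant_weight_code[OF assms(5) is_basis_simplex_rows[OF assms(4)] _ m(2)
        simplex_code_constant_weight[OF assms(4)]] m(1)
    unfolding q_def n'_def by simp
qed

end
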